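(* Let $n\ge 20$ be an integer. For all integers $p\ge 1$ and $q\ge 3$ with $p+q=n-2$, $$\lambda_{\min}\big(\mathcal U(p,q)^c\big)\ \ge\ \lambda_{\min}\Big(\mathcal U\big(\lceil (n-2)/2\rceil,\lfloor (n-2)/2\rfloor\big)^c\Big),$$ with equality if and only if $p=\lceil (n-2)/2\rceil$ and $q=\lfloor (n-2)/2\rfloor$.
   Context: All graphs are simple and finite. For a graph $G$, $\lambda_{\min}(G)$ denotes the least eigenvalue of the adjacency matrix $A(G)$, and $G^c$ denotes the complement of $G$. $K_{1,m}$ is the star with $m$ edges; its vertex of degree $m$ is the center and the others are pendant vertices. $S_m^3$ denotes the graph of order $m$ obtained from $K_{1,m-1}$ by adding one edge between two of its pendant vertices. For integers $p\ge 1$, $q\ge 3$, $\mathcal U(p,q)$ is the graph of order $p+q+2$ obtained from disjoint copies of $K_{1,p}$ and $S_{q+1}^3$ by adding one edge joining a pendant vertex of $K_{1,p}$ to a pendant (degree-one) vertex of $S_{q+1}^3$. *)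

theory Defs
  imports "Jordan_Normal_Form.Char_Poly"
begin

text \<open>A finite simple graph on vertex set {0..<N} is given by N and a
symmetric irreflexive adjacency predicate (only its values on {0..<N} matter).\<close>

definition adj_matrix :: "nat \<Rightarrow> (nat \<Rightarrow> nat \<Rightarrow> bool) \<Rightarrow> real mat" where
  "adj_matrix N E = mat N N (\<lambda>(i,j). if E i j then 1 else 0)"

definition compl_graph :: "(nat \<Rightarrow> nat \<Rightarrow> bool) \<Rightarrow> nat \<Rightarrow> nat \<Rightarrow> bool" where
  "compl_graph E i j \<longleftrightarrow> i \<noteq> j \<and> \<not> E i j"

text \<open>Least eigenvalue of the adjacency matrix (real symmetric, so all eigenvalues are real).\<close>
definition lambda_min :: "nat \<Rightarrow> (nat \<Rightarrow> nat \<Rightarrow> bool) \<Rightarrow> real" where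
  "lambda_min N E = Min {k. eigenvalue (adj_matrix N E) k}"

text \<open>U(p,q) on vertices {0..<p+q+2}: K_{1,p} has centre 0 and pendants 1..p;
S^3_{q+1} has centre p+1, pendants p+2..p+q+1, with extra edge between p+q and p+q+1;
the connecting edge joins pendant 1 of the star to the degree-one pendant p+2.\<close>
definition U_edge :: "nat \<Rightarrow> nat \<Rightarrow> nat \<Rightarrow> nat \<Rightarrow> bool" where
  "U_edge p q i j \<longleftrightarrow>
     (i = 0 \<and> 1 \<le> j \<and> j \<le> p) \<or>
     (i = p + 1 \<and> p + 2 \<le> j \<and> j \<le> p + q + 1) \<or>
     (i = p + q \<and> j = p + q + 1) \<or>
     (i = 1 \<and> j = p + 2)"

definition U_graph :: "nat \<Rightarrow> nat \<Rightarrow> nat \<Rightarrow> nat \<Rightarrow> bool" where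
  "U_graph p q i j \<longleftrightarrow> U_edge p q i j \<or> U_edge p q j i"

end

theory Submission
  imports Defs "HOL-Real_Asymp.Real_Asymp"
begin

text \<open>Away from 0, -1 and -2, an eigenvector of the complement of U(p,q) is constant on the
pendant vertices of either star not lying on the bridge, and on the two triangle vertices,
so it is governed by the equations of the induced vertex partition; eliminating them shows
that these eigenvalues are exactly the roots of a degree 7 polynomial U_poly p q. For fixed
p + q, the difference of two such polynomials factors as (p - p') ((q - p') H + L) with H >
L > 0 below -4, so there the balanced polynomial strictly dominates all others. The balanced
polynomial is positive at -4, hence its least root lies below -4 and is the least eigenvalue
of the balanced complement, and no other complement has an eigenvalue at or below it.\<close>

definition closed_nbhd :: "nat \<Rightarrow> (nat \<Rightarrow> nat \<Rightarrow> bool) \<Rightarrow> nat \<Rightarrow> nat set" where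
  "closed_nbhd N E i = {j. j < N \<and> (j = i \<or> E i j)}"

lemma compl_adj_mult_vec_index:
  fixes f :: "nat \<Rightarrow> real"
  assumes "i < N"
  shows "(adj_matrix N (compl_graph E) *\<^sub>v vec N f) $ i = (\<Sum>j<N. f j) - sum f (closed_nbhd N E i)"
proof -
  have "(adj_matrix N (compl_graph E) *\<^sub>v vec N f) $ i
        = (\<Sum>j<N. (if compl_graph E i j then 1 else 0) * f j)"
    using assms by (simp add: adj_matrix_def scalar_prod_def atLeast0LessThan)
  also have "\<dots> = (\<Sum>j<N. f j - (if j \<in> closed_nbhd N E i then f j else 0))"
    by (rule sum.cong) (auto simp: compl_graph_def closed_nbhd_def)
  also have "\<dots> = (\<Sum>j<N. f j) - sum f (closed_nbhd N E i)"
    by (simp add: sum_subtractf sum.inter_filter[symmetric] closed_nbhd_def)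
  finally show ?thesis .
qed

lemma eigenvalue_adj_matrix_iff:
  "eigenvalue (adj_matrix N E) k \<longleftrightarrow>
     (\<exists>f. (\<exists>i<N. f i \<noteq> 0) \<and> (\<forall>i<N. (adj_matrix N E *\<^sub>v vec N f) $ i = k * f i))"
proof
  assume "eigenvalue (adj_matrix N E) k"
  then obtain v where v: "v \<in> carrier_vec N" "v \<noteq> 0\<^sub>v N" "adj_matrix N E *\<^sub>v v = k \<cdot>\<^sub>v v"
    by (auto simp: eigenvalue_def eigenvector_def adj_matrix_def)
  have "vec N (($) v) = v" using v(1) by auto
  moreover have "\<exists>i<N. v $ i \<noteq> 0" using v(1,2) by (metis eq_vecI carrier_vecD index_zero_vec)
  moreover have "\<forall>i<N. (adj_matrix N E *\<^sub>v v) $ i = k * v $ i" using v(1,3) by simp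
  ultimately show "\<exists>f. (\<exists>i<N. f i \<noteq> 0) \<and> (\<forall>i<N. (adj_matrix N E *\<^sub>v vec N f) $ i = k * f i)"
    by metis
next
  assume "\<exists>f. (\<exists>i<N. f i \<noteq> 0) \<and> (\<forall>i<N. (adj_matrix N E *\<^sub>v vec N f) $ i = k * f i)"
  then obtain f where "\<exists>i<N. f i \<noteq> 0" "\<forall>i<N. (adj_matrix N E *\<^sub>v vec N f) $ i = k * f i"
    by blast
  then have "eigenvector (adj_matrix N E) (vec N f) k"
    by (auto simp: eigenvector_def adj_matrix_def vec_eq_iff)
  then show "eigenvalue (adj_matrix N E) k"
    by (auto simp: eigenvalue_def)
qed

lemma finite_eigenvalues:
  assumes "A \<in> carrier_mat N N"
  shows "finite {k :: real. eigenvalue A k}"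
proof -
  have "char_poly A \<noteq> 0" using degree_monic_char_poly[OF assms] by auto
  then show ?thesis
    using poly_roots_finite eigenvalue_root_char_poly[OF assms] by simp
qed

lemma lambda_min_eigenvalue:
  assumes "eigenvalue (adj_matrix N E) k"
  shows "eigenvalue (adj_matrix N E) (lambda_min N E)" and "lambda_min N E \<le> k"
proof -
  let ?S = "{k. eigenvalue (adj_matrix N E) k}"
  have fin: "finite ?S"
    by (rule finite_eigenvalues[of _ N]) (simp add: adj_matrix_def)
  have "Min ?S \<in> ?S" using fin assms by (intro Min_in) auto
  then show "eigenvalue (adj_matrix N E) (lambda_min N E)"
    unfolding lambda_min_def by simp
  show "lambda_min N E \<le> k"
    unfolding lambda_min_def using fin assms by simp
qed

lemma eigenvalue_compl_zero_if_closed_twins: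
  assumes sym: "\<And>i j. E i j \<longleftrightarrow> E j i" and uv: "u < N" "v < N" "u \<noteq> v"
    and twins: "closed_nbhd N E u = closed_nbhd N E v"
  shows "eigenvalue (adj_matrix N (compl_graph E)) 0"
proof -
  define f :: "nat \<Rightarrow> real" where "f j = (if j = u then 1 else 0) - (if j = v then 1 else 0)" for j
  have sum_f: "sum f S = (if u \<in> S then 1 else 0) - (if v \<in> S then 1 else 0)" if "finite S" for S
    using that by (simp add: f_def sum_subtractf)
  have "(adj_matrix N (compl_graph E) *\<^sub>v vec N f) $ i = 0 * f i" if i: "i < N" for i
  proof -
    have "a \<in> closed_nbhd N E b \<longleftrightarrow> b \<in> closed_nbhd N E a" if "a < N" "b < N" for a b
      using that sym by (auto simp: closed_nbhd_def)
    then have "u \<in> closed_nbhd N E i \<longleftrightarrow> v \<in> closed_nbhd N E i"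
      using i uv twins by simp
    moreover have "finite (closed_nbhd N E i)" by (simp add: closed_nbhd_def)
    ultimately show ?thesis
      using i uv by (simp add: compl_adj_mult_vec_index sum_f)
  qed
  moreover have "f u \<noteq> 0" using uv by (simp add: f_def)
  ultimately show ?thesis
    unfolding eigenvalue_adj_matrix_iff using uv by blast
qed

abbreviation U_compl_adj :: "nat \<Rightarrow> nat \<Rightarrow> real mat" where
  "U_compl_adj p q \<equiv> adj_matrix (p + q + 2) (compl_graph (U_graph p q))"

lemma U_graph_sym: "U_graph p q i j \<longleftrightarrow> U_graph p q j i"
  by (auto simp: U_graph_def)

lemma closed_nbhd_U_graph:
  assumes "p \<ge> 1" and "q \<ge> 3"
  shows "closed_nbhd (p+q+2) (U_graph p q) 0 = {0, 1} \<union> {2..p}"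
    and "i \<in> {2..p} \<Longrightarrow> closed_nbhd (p+q+2) (U_graph p q) i = {0, i}"
    and "closed_nbhd (p+q+2) (U_graph p q) 1 = {0, 1, p+2}"
    and "closed_nbhd (p+q+2) (U_graph p q) (p+1) = {p+1, p+2} \<union> {p+3..<p+q} \<union> {p+q, p+q+1}"
    and "closed_nbhd (p+q+2) (U_graph p q) (p+2) = {1, p+1, p+2}"
    and "i \<in> {p+3..<p+q} \<Longrightarrow> closed_nbhd (p+q+2) (U_graph p q) i = {p+1, i}"
    and "closed_nbhd (p+q+2) (U_graph p q) (p+q) = {p+1, p+q, p+q+1}"
    and "closed_nbhd (p+q+2) (U_graph p q) (p+q+1) = {p+1, p+q, p+q+1}"
  using assms by (auto simp: closed_nbhd_def U_graph_def U_edge_def)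

lemma U_vertex_cases:
  fixes i p q :: nat
  assumes "i < p + q + 2"
  obtains "i = 0" | "i = 1" | "i \<in> {2..p}" | "i = p+1" | "i = p+2" | "i \<in> {p+3..<p+q}"
    | "i = p+q" | "i = p+q+1"
  using assms by fastforce

lemma sum_U_vertices:
  fixes f :: "nat \<Rightarrow> real"
  assumes "p \<ge> 1" and "q \<ge> 3"
  shows "(\<Sum>j<p+q+2. f j) = f 0 + f 1 + sum f {2..p} + f (p+1) + f (p+2)
           + sum f {p+3..<p+q} + f (p+q) + f (p+q+1)"
proof -
  have "{..<p+q+2} = {0, 1} \<union> {2..p} \<union> {p+1, p+2} \<union> {p+3..<p+q} \<union> {p+q, p+q+1}"
    using assms by auto
  moreover have "{2..p} \<inter> {p+3..<p+q} = {}" by auto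
  ultimately show ?thesis
    using assms by (simp add: sum.union_disjoint algebra_simps)
qed

lemma compl_U_mult_vec_index:
  fixes f :: "nat \<Rightarrow> real" and p q :: nat
  assumes p: "p \<ge> 1" and q: "q \<ge> 3"
  defines "Af \<equiv> \<lambda>i. (U_compl_adj p q *\<^sub>v vec (p+q+2) f) $ i"
    and "T \<equiv> \<Sum>j<p+q+2. f j"
  shows "Af 0 = T - (f 0 + f 1 + sum f {2..p})"
    and "i \<in> {2..p} \<Longrightarrow> Af i = T - (f 0 + f i)"
    and "Af 1 = T - (f 0 + f 1 + f (p+2))"
    and "Af (p+1) = T - (f (p+1) + f (p+2) + sum f {p+3..<p+q} + f (p+q) + f (p+q+1))"
    and "Af (p+2) = T - (f 1 + f (p+1) + f (p+2))"
    and "i \<in> {p+3..<p+q} \<Longrightarrow> Af i = T - (f (p+1) + f i)"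
    and "Af (p+q) = T - (f (p+1) + f (p+q) + f (p+q+1))"
    and "Af (p+q+1) = T - (f (p+1) + f (p+q) + f (p+q+1))"
proof -
  have Af: "Af i = T - sum f (closed_nbhd (p+q+2) (U_graph p q) i)" if "i < p+q+2" for i
    using that unfolding Af_def T_def by (rule compl_adj_mult_vec_index)
  note N = closed_nbhd_U_graph[OF p q]
  show "Af 0 = T - (f 0 + f 1 + sum f {2..p})"
    using Af[of 0, unfolded N(1)] by (simp add: sum.union_disjoint)
  show "Af i = T - (f 0 + f i)" if "i \<in> {2..p}" for i
    using Af[of i, unfolded N(2)[OF that]] that by simp
  show "Af 1 = T - (f 0 + f 1 + f (p+2))"
    using Af[of 1, unfolded N(3)] by simp
  show "Af (p+1) = T - (f (p+1) + f (p+2) + sum f {p+3..<p+q} + f (p+q) + f (p+q+1))"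
    using Af[of "p+1", unfolded N(4)] q by (simp add: sum.union_disjoint algebra_simps)
  show "Af (p+2) = T - (f 1 + f (p+1) + f (p+2))"
    using Af[of "p+2", unfolded N(5)] p q by (simp add: algebra_simps)
  show "Af i = T - (f (p+1) + f i)" if "i \<in> {p+3..<p+q}" for i
    using Af[of i, unfolded N(6)[OF that]] that by simp
  show "Af (p+q) = T - (f (p+1) + f (p+q) + f (p+q+1))"
    using Af[of "p+q", unfolded N(7)] q by (simp add: algebra_simps)
  show "Af (p+q+1) = T - (f (p+1) + f (p+q) + f (p+q+1))"
    using Af[of "p+q+1", unfolded N(8)] q by (simp add: algebra_simps)
qed

lemma eigenvalue_compl_U_zero:
  assumes "p \<ge> 1" and "q \<ge> 3"
  shows "eigenvalue (U_compl_adj p q) 0"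
  using closed_nbhd_U_graph(7,8)[OF assms]
  by (intro eigenvalue_compl_zero_if_closed_twins[of _ "p+q" _ "p+q+1"]) (auto simp: U_graph_sym)

text \<open>The factor of the characteristic polynomial of the complement of U(p,q) that carries its
eigenvalues other than 0, -1 and -2.\<close>
definition U_poly :: "real \<Rightarrow> real \<Rightarrow> real \<Rightarrow> real" where
  "U_poly p q x = x^7 + (6-p-q)*x^6 + (16-6*(p+q))*x^5 + (2*p*q-12*p-12*q+20)*x^4
     + (7*p*q-11*p-7*q+1)*x^3 + (4*p*q+6*q-20)*x^2 + (-4*p*q+11*p+7*q-13)*x + (8-2*p-2*q)"

text \<open>The eigen-equations x f i = T - (sum of f over the closed neighbourhood of i) of the
complement, for a vector f with sum T that is constant on the classes {2..p}, {p+3..<p+q} and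
{p+q, p+q+1}: a, b, c, d are the entries at 0, 1, p+1, p+2, sA and sC the sums over {2..p}
and {p+3..<p+q}, and g the entry at p+q and p+q+1.\<close>
definition U_class_eqs ::
    "real \<Rightarrow> real \<Rightarrow> real \<Rightarrow> real \<Rightarrow> real \<Rightarrow> real \<Rightarrow> real \<Rightarrow> real \<Rightarrow> real \<Rightarrow> real \<Rightarrow> real \<Rightarrow> bool"
  where
  "U_class_eqs p q x T a b sA c d sC g \<longleftrightarrow>
     T = a + b + sA + c + d + sC + 2*g \<and>
     x*a = T - a - b - sA \<and>
     x*b = T - a - b - d \<and>
     (x+1)*sA = (p-1)*(T-a) \<and>
     x*c = T - c - d - sC - 2*g \<and>
     x*d = T - b - c - d \<and>
     (x+1)*sC = (q-3)*(T-c) \<and>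
     x*g = T - c - 2*g"

lemma U_class_eqs_imp_U_poly:
  assumes "U_class_eqs p q x T a b sA c d sC g"
  shows "(x+1)^2*(x+2)*U_poly p q x * T = 0" and "(x+1)^2*(x+2)*U_poly p q x * a = 0"
  using assms unfolding U_class_eqs_def U_poly_def by Groebner_Basis.algebra+

lemma U_class_eqs_zero:
  assumes "U_class_eqs p q x 0 0 b sA c d sC g" and "x + 1 \<noteq> 0" and "x + 2 \<noteq> 0"
  shows "b = 0" and "c = 0" and "d = 0" and "g = 0"
proof -
  from assms(1) have "(x+1)*sA = 0" by (simp add: U_class_eqs_def)
  with assms show b: "b = 0" by (simp add: U_class_eqs_def)
  with assms show d: "d = 0" by (simp add: U_class_eqs_def)
  with assms b show c: "c = 0" by (simp add: U_class_eqs_def)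
  with assms have "(x+2)*g = 0" by (simp add: U_class_eqs_def algebra_simps)
  with assms show "g = 0" by simp
qed

lemma singular_2x2_kernel:
  fixes \<alpha> \<beta> \<gamma> \<delta> :: "'a :: comm_ring_1"
  assumes "\<alpha> * \<delta> = \<beta> * \<gamma>"
  obtains u v where "u \<noteq> 0 \<or> v \<noteq> 0" and "\<alpha> * u + \<beta> * v = 0" and "\<gamma> * u + \<delta> * v = 0"
proof (cases "\<alpha> \<noteq> 0 \<or> \<beta> \<noteq> 0")
  case True
  with assms show ?thesis by (intro that[of \<beta> "-\<alpha>"]) (auto simp: algebra_simps)
next
  case False
  show ?thesis
  proof (cases "\<gamma> \<noteq> 0 \<or> \<delta> \<noteq> 0")
    case True
    with False show ?thesis by (intro that[of \<delta> "-\<gamma>"]) (auto simp: algebra_simps)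
  next
    case False
    with \<open>\<not> (\<alpha> \<noteq> 0 \<or> \<beta> \<noteq> 0)\<close> show ?thesis by (intro that[of 1 0]) auto
  qed
qed

lemma U_class_eqs_solvable:
  assumes x: "x + 1 \<noteq> 0" "x + 2 \<noteq> 0" and root: "U_poly p q x = 0"
  obtains T a b sA c d sC g where "T \<noteq> 0 \<or> a \<noteq> 0" and "U_class_eqs p q x T a b sA c d sC g"
proof -
  \<comment> \<open>Solving all class equations except those of c and T successively for sA, b, d, c, sC, g
    leaves two linear equations in T and a, whose determinant is -(x+1)^2 (x+2) U_poly p q x.\<close>
  define \<alpha>\<^sub>1 where "\<alpha>\<^sub>1 = - (x^6) + x^5*p - 7*x^5 + 6*x^4*p + x^4*q
      - 20*x^4 - x^3*p*q + 13*x^3*p + 5*x^3*q - 30*x^3 - 4*x^2*p*q + 14*x^2*p + 8*x^2*q - 22*x^2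
      - 4*x*p*q + 7*x*p + 3*x*q - x - 2*p - 2*q + 8"
  define \<beta>\<^sub>1 where "\<beta>\<^sub>1 = x^7 + 8*x^6 - x^5*p - x^5*q + 26*x^5 - 6*x^4*p
      - 6*x^4*q + 46*x^4 + x^3*p*q - 13*x^3*p - 13*x^3*q + 47*x^3 + 4*x^2*p*q - 14*x^2*p
      - 12*x^2*q + 22*x^2 + 4*x*p*q - 7*x*p - 3*x*q - 3*x + 2*p + 2*q - 8"
  define \<alpha>\<^sub>2 where "\<alpha>\<^sub>2 = - (x^5) + x^4*p + x^4*q - 6*x^4 - x^3*p*q
      + 5*x^3*p + 5*x^3*q - 16*x^3 - 4*x^2*p*q + 10*x^2*p + 8*x^2*q - 20*x^2 - 4*x*p*q + 7*x*p
      + 3*x*q - 6*x - 2*p - 2*q + 6"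
  define \<beta>\<^sub>2 where "\<beta>\<^sub>2 = x^6 - x^5*q + 7*x^5 - x^4*p - 6*x^4*q + 22*x^4
      + x^3*p*q - 5*x^3*p - 13*x^3*q + 36*x^3 + 4*x^2*p*q - 10*x^2*p - 12*x^2*q + 26*x^2
      + 4*x*p*q - 7*x*p - 3*x*q + x + 2*p + 2*q - 8"
  have "\<alpha>\<^sub>1 * \<beta>\<^sub>2 - \<beta>\<^sub>1 * \<alpha>\<^sub>2 = -((x+1)^2*(x+2)*U_poly p q x)"
    unfolding \<alpha>\<^sub>1_def \<beta>\<^sub>1_def \<alpha>\<^sub>2_def \<beta>\<^sub>2_def U_poly_def by Groebner_Basis.algebra
  with root have "\<alpha>\<^sub>1 * \<beta>\<^sub>2 = \<beta>\<^sub>1 * \<alpha>\<^sub>2" by simp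
  then obtain T a where nz: "T \<noteq> 0 \<or> a \<noteq> 0"
    and eq1: "\<alpha>\<^sub>1 * T + \<beta>\<^sub>1 * a = 0" and eq2: "\<alpha>\<^sub>2 * T + \<beta>\<^sub>2 * a = 0"
    by (rule singular_2x2_kernel)
  define sA where "sA = (p-1)*(T-a)/(x+1)"
  define b where "b = T - a - sA - x*a"
  define d where "d = T - a - b - x*b"
  define c where "c = T - b - d - x*d"
  define sC where "sC = (q-3)*(T-c)/(x+1)"
  define g where "g = (T-c)/(x+2)"
  have sA: "(x+1)*sA = (p-1)*(T-a)" and sC: "(x+1)*sC = (q-3)*(T-c)" and g: "(x+2)*g = T-c"
    using x by (simp_all add: sA_def sC_def g_def)
  have "(x+1)^2*(x+2)*(T - c - d - sC - 2*g - x*c) = \<alpha>\<^sub>1 * T + \<beta>\<^sub>1 * a"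
    using sA b_def d_def c_def sC g unfolding \<alpha>\<^sub>1_def \<beta>\<^sub>1_def by Groebner_Basis.algebra
  with eq1 x have eq_c: "x*c = T - c - d - sC - 2*g" by simp
  have "(x+1)^2*(x+2)*(T - a - b - sA - c - d - sC - 2*g) = \<alpha>\<^sub>2 * T + \<beta>\<^sub>2 * a"
    using sA b_def d_def c_def sC g unfolding \<alpha>\<^sub>2_def \<beta>\<^sub>2_def by Groebner_Basis.algebra
  with eq2 x have eq_T: "T = a + b + sA + c + d + sC + 2*g" by simp
  have "x*g = T - c - 2*g" using g by (simp add: algebra_simps)
  then have "U_class_eqs p q x T a b sA c d sC g"
    unfolding U_class_eqs_def using eq_c eq_T sA sC b_def d_def c_def by (intro conjI; linarith)
  with nz show ?thesis by (rule that)
qed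

lemma mult_sum_eq_card_mult:
  fixes f :: "'a \<Rightarrow> 'b :: comm_semiring_1"
  assumes "\<And>i. i \<in> S \<Longrightarrow> c * f i = K"
  shows "c * sum f S = of_nat (card S) * K"
  using assms by (simp add: sum_distrib_left)

lemma compl_U_eigen_eqs_iff:
  fixes f :: "nat \<Rightarrow> real"
  assumes p: "p \<ge> 1" and q: "q \<ge> 3" and x: "x \<noteq> 0"
  defines "T \<equiv> \<Sum>j<p+q+2. f j"
  shows "(\<forall>i<p+q+2. (U_compl_adj p q *\<^sub>v vec (p+q+2) f) $ i = x * f i) \<longleftrightarrow>
      U_class_eqs p q x T (f 0) (f 1) (sum f {2..p}) (f (p+1)) (f (p+2)) (sum f {p+3..<p+q}) (f (p+q))
      \<and> f (p+q+1) = f (p+q)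
      \<and> (\<forall>i\<in>{2..p}. (x+1) * f i = T - f 0)
      \<and> (\<forall>i\<in>{p+3..<p+q}. (x+1) * f i = T - f (p+1))"
    (is "?eigen \<longleftrightarrow> ?classes \<and> ?twins \<and> ?pendA \<and> ?pendC")
proof -
  note M = compl_U_mult_vec_index[OF p q, where f = f, folded T_def]
  have sA: "(x+1) * sum f {2..p} = (real p - 1) * (T - f 0)" if ?pendA
    using that p mult_sum_eq_card_mult[of "{2..p}" "x+1" f] by (simp add: of_nat_diff)
  have sC: "(x+1) * sum f {p+3..<p+q} = (real q - 3) * (T - f (p+1))" if ?pendC
    using that q mult_sum_eq_card_mult[of "{p+3..<p+q}" "x+1" f] by (simp add: of_nat_diff)
  have total: "T = f 0 + f 1 + sum f {2..p} + f (p+1) + f (p+2) + sum f {p+3..<p+q} + 2 * f (p+q)"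
    if ?twins
    using that sum_U_vertices[OF p q, of f] unfolding T_def by simp
  show ?thesis
  proof
    assume ?eigen
    then have E: "\<And>i. i < p+q+2 \<Longrightarrow> (U_compl_adj p q *\<^sub>v vec (p+q+2) f) $ i = x * f i" by blast
    have "x * f (p+q) = x * f (p+q+1)" using M(7,8) E[of "p+q"] E[of "p+q+1"] by simp
    then have twins: ?twins using x by simp
    have pendA: ?pendA using M(2) E by (force simp: algebra_simps)
    have pendC: ?pendC using M(6) E by (force simp: algebra_simps)
    have "x * f 0 = T - f 0 - f 1 - sum f {2..p}" "x * f 1 = T - f 0 - f 1 - f (p+2)"
      "x * f (p+1) = T - f (p+1) - f (p+2) - sum f {p+3..<p+q} - 2 * f (p+q)"
      "x * f (p+2) = T - f 1 - f (p+1) - f (p+2)" "x * f (p+q) = T - f (p+1) - 2 * f (p+q)"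
      using M(1,3,4,5,7) E[of 0] E[of 1] E[of "p+1"] E[of "p+2"] E[of "p+q"] twins q by simp_all
    then have ?classes
      unfolding U_class_eqs_def using total[OF twins] sA[OF pendA] sC[OF pendC]
      by (intro conjI) linarith+
    with twins pendA pendC show "?classes \<and> ?twins \<and> ?pendA \<and> ?pendC" by blast
  next
    assume "?classes \<and> ?twins \<and> ?pendA \<and> ?pendC"
    then have classes: ?classes and twins: ?twins and pendA: ?pendA and pendC: ?pendC by blast+
    show ?eigen
    proof (intro allI impI)
      fix i assume "i < p+q+2"
      then consider "i = 0" | "i = 1" | "i \<in> {2..p}" | "i = p+1" | "i = p+2" | "i \<in> {p+3..<p+q}"
        | "i = p+q" | "i = p+q+1"
        by (rule U_vertex_cases)
      then show "(U_compl_adj p q *\<^sub>v vec (p+q+2) f) $ i = x * f i"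
      proof cases
        case 3
        with pendA have "(x+1) * f i = T - f 0" by blast
        with M(2)[OF 3] show ?thesis by (simp add: algebra_simps)
      next
        case 6
        with pendC have "(x+1) * f i = T - f (p+1)" by blast
        with M(6)[OF 6] show ?thesis by (simp add: algebra_simps)
      qed (use classes[unfolded U_class_eqs_def] M twins arg_cong[OF twins, of "times x"]
          in \<open>elim conjE; hypsubst; linarith\<close>)+
    qed
  qed
qed

lemma U_poly_eq_0_if_eigenvalue:
  assumes p: "p \<ge> 1" and q: "q \<ge> 3" and x: "x \<notin> {0, -1, -2}"
    and "eigenvalue (U_compl_adj p q) x"
  shows "U_poly p q x = 0"
proof (rule ccontr)
  assume U_poly: "U_poly p q x \<noteq> 0"
  obtain f where nz: "\<exists>i<p+q+2. f i \<noteq> 0"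
    and "\<forall>i<p+q+2. (U_compl_adj p q *\<^sub>v vec (p+q+2) f) $ i = x * f i"
    using assms(4) unfolding eigenvalue_adj_matrix_iff by blast
  moreover define T where "T = (\<Sum>j<p+q+2. f j)"
  ultimately have classes:
      "U_class_eqs p q x T (f 0) (f 1) (sum f {2..p}) (f (p+1)) (f (p+2)) (sum f {p+3..<p+q}) (f (p+q))"
    and twins: "f (p+q+1) = f (p+q)"
    and pendA: "\<forall>i\<in>{2..p}. (x+1) * f i = T - f 0"
    and pendC: "\<forall>i\<in>{p+3..<p+q}. (x+1) * f i = T - f (p+1)"
    using compl_U_eigen_eqs_iff[OF p q, of x f] x by auto
  have T: "T = 0" and a: "f 0 = 0"
    using U_class_eqs_imp_U_poly[OF classes] U_poly x by auto
  then have zeros: "f 1 = 0" "f (p+1) = 0" "f (p+2) = 0" "f (p+q) = 0"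
    using U_class_eqs_zero[OF classes[unfolded T a]] x by auto
  have "f i = 0" if "i < p+q+2" for i
    by (rule U_vertex_cases[OF that]) (use zeros twins pendA pendC T a x in auto)
  with nz show False by blast
qed

lemma eigenvalue_if_U_poly_eq_0:
  assumes p: "p \<ge> 1" and q: "q \<ge> 3" and x: "x \<notin> {0, -1, -2}"
    and "U_poly p q x = 0"
  shows "eigenvalue (U_compl_adj p q) x"
proof -
  have x1: "x + 1 \<noteq> 0" and x2: "x + 2 \<noteq> 0" using x by auto
  obtain T a b sA c d sC g where nz: "T \<noteq> 0 \<or> a \<noteq> 0"
    and classes: "U_class_eqs p q x T a b sA c d sC g"
    using U_class_eqs_solvable[OF x1 x2 assms(4)] .
  define f where "f i = (if i = 0 then a else if i = 1 then b else if i \<le> p then (T-a)/(x+1)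
    else if i = p+1 then c else if i = p+2 then d else if i < p+q then (T-c)/(x+1) else g)" for i
  have vals: "f 0 = a" "f 1 = b" "f (p+1) = c" "f (p+2) = d" "f (p+q) = g" "f (p+q+1) = g"
    using p q by (auto simp: f_def)
  have pendA: "\<forall>i\<in>{2..p}. (x+1) * f i = T - a" and pendC: "\<forall>i\<in>{p+3..<p+q}. (x+1) * f i = T - c"
    using x1 by (auto simp: f_def)
  have "(x+1) * sum f {2..p} = (x+1) * sA"
    using classes p mult_sum_eq_card_mult[of "{2..p}" "x+1" f] pendA
    by (simp add: U_class_eqs_def of_nat_diff)
  moreover have "(x+1) * sum f {p+3..<p+q} = (x+1) * sC"
    using classes q mult_sum_eq_card_mult[of "{p+3..<p+q}" "x+1" f] pendC
    by (simp add: U_class_eqs_def of_nat_diff)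
  ultimately have sums: "sum f {2..p} = sA" "sum f {p+3..<p+q} = sC" using x1 by simp_all
  have T: "(\<Sum>j<p+q+2. f j) = T"
    using sum_U_vertices[OF p q, of f, unfolded vals sums] classes by (simp add: U_class_eqs_def)
  have "U_class_eqs p q x (\<Sum>j<p+q+2. f j) (f 0) (f 1) (sum f {2..p}) (f (p+1)) (f (p+2))
      (sum f {p+3..<p+q}) (f (p+q))
    \<and> f (p+q+1) = f (p+q)
    \<and> (\<forall>i\<in>{2..p}. (x+1) * f i = (\<Sum>j<p+q+2. f j) - f 0)
    \<and> (\<forall>i\<in>{p+3..<p+q}. (x+1) * f i = (\<Sum>j<p+q+2. f j) - f (p+1))"
    unfolding T vals sums using classes pendA pendC by simp
  then have "\<forall>i<p+q+2. (U_compl_adj p q *\<^sub>v vec (p+q+2) f) $ i = x * f i"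
    using x by (intro compl_U_eigen_eqs_iff[OF p q, THEN iffD2]) auto
  moreover have "\<exists>i<p+q+2. f i \<noteq> 0"
  proof (rule ccontr)
    assume "\<not> (\<exists>i<p+q+2. f i \<noteq> 0)"
    then have "(\<Sum>j<p+q+2. f j) = 0" and "f 0 = 0" by simp_all
    with nz T vals show False by simp
  qed
  ultimately show ?thesis
    unfolding eigenvalue_adj_matrix_iff by blast
qed

lemma U_poly_diff:
  assumes "p + q = p' + q'"
  shows "U_poly p q x - U_poly p' q' x
    = (p - p') * ((q - p') * (2*x^4 + 7*x^3 + 4*x^2 - 4*x) + (4*x - 6*x^2 - 4*x^3))"
proof -
  have "q = p' + q' - p" using assms by simp
  then show ?thesis unfolding U_poly_def by Groebner_Basis.algebra
qed

lemma U_poly_diff_coeffs_pos: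
  fixes x :: real
  assumes x: "x < -4"
  shows "0 < 4*x - 6*x^2 - 4*x^3" and "4*x - 6*x^2 - 4*x^3 < 2*x^4 + 7*x^3 + 4*x^2 - 4*x"
proof -
  have L: "4*x - 6*x^2 - 4*x^3 = (-2*x) * ((2*x - 1) * (x + 2))" by Groebner_Basis.algebra
  have HL: "(2*x^4 + 7*x^3 + 4*x^2 - 4*x) - (4*x - 6*x^2 - 4*x^3) = (x * (x + 4)) * ((2*x - 1) * (x + 2))"
    by Groebner_Basis.algebra
  have pos: "0 < -2*x" "0 < (2*x - 1) * (x + 2)" "0 < x * (x + 4)"
    using x by (auto intro: mult_neg_neg)
  show "0 < 4*x - 6*x^2 - 4*x^3"
    unfolding L by (rule mult_pos_pos[OF pos(1,2)])
  show "4*x - 6*x^2 - 4*x^3 < 2*x^4 + 7*x^3 + 4*x^2 - 4*x"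
    using HL pos mult_pos_pos[of "x * (x + 4)" "(2*x - 1) * (x + 2)"] by linarith
qed

lemma U_poly_less_balanced:
  fixes p q p' q' :: nat and x :: real
  assumes x: "x < -4" and sum: "p + q = p' + q'" and "p \<noteq> p'"
    and balanced: "q' \<le> p'" "p' \<le> q' + 1"
  shows "U_poly p q x < U_poly p' q' x"
proof -
  define H where "H = 2*x^4 + 7*x^3 + 4*x^2 - 4*x"
  define L where "L = 4*x - 6*x^2 - 4*x^3"
  have L: "0 < L" and HL: "L < H" using U_poly_diff_coeffs_pos[OF x] unfolding H_def L_def by auto
  have diff: "U_poly p q x - U_poly p' q' x = (real p - real p') * ((real q - real p') * H + L)"
    unfolding H_def L_def using sum by (intro U_poly_diff) (metis of_nat_add)
  have "(real p - real p') * ((real q - real p') * H + L) < 0"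
  proof (cases "p' < p")
    case True
    then have "real q - real p' \<le> -1" using sum balanced by linarith
    then have "(real q - real p') * H \<le> -1 * H" using L HL by (intro mult_right_mono) auto
    with True HL show ?thesis by (simp add: mult_pos_neg)
  next
    case False
    with \<open>p \<noteq> p'\<close> sum balanced have "p < p'" "0 \<le> real q - real p'" by linarith+
    then have "0 \<le> (real q - real p') * H" using L HL by simp
    then have "0 < (real q - real p') * H + L" using L by simp
    with \<open>p < p'\<close> show ?thesis by (simp add: mult_neg_pos)
  qed
  with diff show ?thesis by linarith
qed

lemma U_poly_balanced_at_minus_4:
  fixes p q :: nat
  assumes "9 \<le> q" "q \<le> p" "p \<le> q + 1"
  shows "0 < U_poly p q (-4)"
proof -
  have at_4: "U_poly p q (-4) = 144 * real p * real q - 366 * real p - 510 * real q - 3396"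
    unfolding U_poly_def by (simp add: algebra_simps)
  have q: "0 \<le> real q * (real q - 9)" "81 \<le> 9 * real q" using assms by simp_all
  consider "p = q" | "p = q + 1" using assms by linarith
  then show ?thesis
  proof cases
    case 1
    have "U_poly p q (-4) = 144 * (real q * (real q - 9)) + 420 * real q - 3396"
      using at_4 unfolding 1 by (simp add: algebra_simps)
    with q show ?thesis by linarith
  next
    case 2
    have "U_poly p q (-4) = 144 * (real q * (real q - 9)) + 564 * real q - 3762"
      using at_4 unfolding 2 by (simp add: algebra_simps)
    with q show ?thesis by linarith
  qed
qed

lemma U_poly_root_below:
  assumes "0 < U_poly p q b"
  obtains r where "r < b" and "U_poly p q r = 0"
proof -
  have "filterlim (U_poly p q) at_bot at_bot"
    unfolding U_poly_def by real_asymp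
  then have "eventually (\<lambda>x. U_poly p q x \<le> -1) at_bot"
    by (simp add: filterlim_at_bot)
  then obtain N where N: "\<And>x. x \<le> N \<Longrightarrow> U_poly p q x \<le> -1"
    by (auto simp: eventually_at_bot_linorder)
  define z where "z = min N b"
  have "continuous_on {z..b} (U_poly p q)"
    unfolding U_poly_def by (intro continuous_intros)
  then obtain r where "z \<le> r" "r \<le> b" "U_poly p q r = 0"
    using IVT'[of "U_poly p q" z 0 b] N[of z] assms by (force simp: z_def)
  with assms show ?thesis
    by (intro that[of r]) (auto simp: le_less)
qed

lemma lambda_min_compl_U_balanced:
  fixes p q :: nat
  assumes balanced: "9 \<le> q" "q \<le> p" "p \<le> q + 1"
  defines "\<mu> \<equiv> lambda_min (p+q+2) (compl_graph (U_graph p q))"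
  shows "\<mu> < -4" and "y \<le> \<mu> \<Longrightarrow> U_poly p q y \<le> 0"
proof -
  have p: "p \<ge> 1" and q: "q \<ge> 3" using balanced by linarith+
  have \<mu>_le_low_root: "\<mu> \<le> r" if "r < -4" and "U_poly p q r = 0" for r
    using that eigenvalue_if_U_poly_eq_0[OF p q, of r] lambda_min_eigenvalue(2)
    unfolding \<mu>_def by auto
  obtain r where "r < -4" "U_poly p q r = 0"
    using U_poly_root_below U_poly_balanced_at_minus_4[OF balanced] by blast
  with \<mu>_le_low_root show \<mu>: "\<mu> < -4" by fastforce
  show "U_poly p q y \<le> 0" if "y \<le> \<mu>"
  proof (rule ccontr)
    assume "\<not> U_poly p q y \<le> 0"
    then obtain r where "r < y" "U_poly p q r = 0"
      using U_poly_root_below by (metis not_le)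
    with \<mu> \<mu>_le_low_root[of r] that show False by linarith
  qed
qed

theorem lemma2p2:
  fixes n p q :: nat
  assumes "n \<ge> 20" and "p \<ge> 1" and "q \<ge> 3" and "p + q = n - 2"
  shows "lambda_min n (compl_graph (U_graph p q))
           \<ge> lambda_min n (compl_graph (U_graph ((n - 1) div 2) ((n - 2) div 2)))
       \<and> (lambda_min n (compl_graph (U_graph p q))
           = lambda_min n (compl_graph (U_graph ((n - 1) div 2) ((n - 2) div 2)))
          \<longleftrightarrow> p = (n - 1) div 2 \<and> q = (n - 2) div 2)"
proof (cases "p = (n - 1) div 2")
  case True
  with assms have "q = (n - 2) div 2" by linarith
  with True show ?thesis by simp
next
  case False
  define p' q' where "p' = (n - 1) div 2" and "q' = (n - 2) div 2"
  have n: "n = p + q + 2" "n = p' + q' + 2" and balanced: "9 \<le> q'" "q' \<le> p'" "p' \<le> q' + 1"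
    using assms unfolding p'_def q'_def by linarith+
  let ?\<theta> = "lambda_min n (compl_graph (U_graph p q))"
  let ?\<mu> = "lambda_min n (compl_graph (U_graph p' q'))"
  have "eigenvalue (U_compl_adj p q) ?\<theta>"
    using lambda_min_eigenvalue(1)[OF eigenvalue_compl_U_zero[OF assms(2,3)]] n(1) by simp
  have "?\<mu> < ?\<theta>"
  proof (rule ccontr)
    assume "\<not> ?\<mu> < ?\<theta>"
    then have "?\<theta> \<le> ?\<mu>" and "?\<theta> < -4"
      using lambda_min_compl_U_balanced(1)[OF balanced] n(2) by auto
    then have "U_poly p q ?\<theta> = 0" and "U_poly p' q' ?\<theta> \<le> 0"
      using U_poly_eq_0_if_eigenvalue[OF assms(2,3)] \<open>eigenvalue (U_compl_adj p q) ?\<theta>\<close>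
        lambda_min_compl_U_balanced(2)[OF balanced] n(2) by auto
    moreover have "U_poly p q ?\<theta> < U_poly p' q' ?\<theta>"
      using U_poly_less_balanced[OF \<open>?\<theta> < -4\<close> _ False[folded p'_def] balanced(2,3)] n by simp
    ultimately show False by linarith
  qed
  with False show ?thesis unfolding p'_def q'_def by auto
qed

end
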